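(* Fix $T>0$, $r,\nu,\mu\in\mathbb R$, $\eta>0$, $\sigma>0$, $\rho\in(-1,1)$, $s_0>0$, $\lambda>0$, and let $\delta=\nu-\eta\rho\frac{\mu-r}{\sigma}$. For $\gamma\in(0,+\infty)$ define $\bar\theta(\gamma)=\lambda\gamma(1-\rho^2)$, $\bar w(\gamma)=W\left(s_0\eta^2Te^{(\delta-\frac{\eta^2}{2})T}\bar\theta(\gamma)\right)$ and $$\bar d(\gamma)=\frac{\lambda e^{-rT}}{\bar\theta(\gamma)\eta^2T}\left(\bar w(\gamma)+\frac{\bar w(\gamma)^2}{2}\right),$$ where $W$ is the Lambert function. Then $\bar d$ is $C^1$ and strictly decreasing on $(0,+\infty)$, $$\lim_{\gamma\to0^+}\bar d(\gamma)=\lambda e^{-rT}s_0e^{(\delta-\frac{\eta^2}{2})T},\qquad\lim_{\gamma\to+\infty}\bar d(\gamma)=0,$$ and $\bar d$ is bounded.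
   Context: The Lambert function $W$ is the inverse of the bijection $x\in(-1,+\infty)\mapsto xe^x\in(-1/e,+\infty)$. The quantity $\bar d(\gamma)$ is the deterministic lower approximation of the asking reservation price of $\lambda$ units of a non-traded stock for an agent with exponential utility of risk aversion $\gamma$. *)

theory Defs
  imports "HOL-Analysis.Analysis"
begin

text \<open>Lambert function: inverse of x \<in> (-1,+\<infinity>) \<mapsto> x e^x \<in> (-1/e,+\<infinity>).
  Only meaningful for y > -1/e.\<close>
definition lambertW :: "real \<Rightarrow> real" where
  "lambertW y = (THE x. x > -1 \<and> x * exp x = y)"

end

theory Submission
  imports Defs "HOL-Real_Asymp.Real_Asymp"
begin

(* Write W for lambertW and put a = s0 eta^2 T exp((delta - eta^2/2) T) lam (1 - rho^2) > 0.
   Then d(gamma) = lam exp(-r T) s0 exp((delta - eta^2/2) T) * dbar_shape (a gamma) with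
   dbar_shape y = (W y + (W y)^2/2) / y.  Because W(y) exp(W(y)) = y, this shape equals
   exp(-W y) (1 + W y / 2), whose derivative -exp(-2 W y)/2 is continuous and negative.
   As y runs through (0, +oo), W y increases continuously from 0 to +oo, so the shape
   decreases from 1 to 0 and stays in (0, 1]. *)

lemma DERIV_mult_exp: "DERIV (\<lambda>x::real. x * exp x) x :> exp x * (1 + x)"
  by (auto intro!: derivative_eq_intros simp: algebra_simps)

lemma strict_mono_on_mult_exp: "strict_mono_on {-1<..} (\<lambda>x::real. x * exp x)"
proof (rule strict_mono_onI)
  fix x y :: real assume "x \<in> {-1<..}" "x < y"
  then show "x * exp x < y * exp y"
    by (intro DERIV_pos_imp_increasing[OF \<open>x < y\<close>]) (auto intro!: exI DERIV_mult_exp)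
qed

lemma lambertW_mult_exp:
  assumes "x > -1" shows "lambertW (x * exp x) = x"
  unfolding lambertW_def
proof (rule the_equality)
  fix z assume "z > -1 \<and> z * exp z = x * exp x"
  then show "z = x"
    using strict_mono_on_imp_inj_on[OF strict_mono_on_mult_exp] assms
    by (auto simp: inj_on_def)
qed (use assms in simp)

lemma mult_exp_surj:
  fixes y :: real assumes "y > - exp (-1)"
  obtains x where "x > -1" "x * exp x = y"
proof -
  have "y \<le> max 0 y * exp (max 0 y)"
    by (cases "y > 0") simp_all
  moreover have "\<forall>x. -1 \<le> x \<and> x \<le> max 0 y \<longrightarrow> isCont (\<lambda>x. x * exp x) x"
    by (intro allI impI continuous_intros)
  ultimately have "\<exists>x. -1 \<le> x \<and> x \<le> max 0 y \<and> x * exp x = y"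
    using assms by (intro IVT) simp_all
  then obtain x where "-1 \<le> x" "x * exp x = y" by blast
  moreover have "x \<noteq> -1" using assms \<open>x * exp x = y\<close> by auto
  ultimately show ?thesis using that by force
qed

lemma lambertW_gt_minus_one: "y > - exp (-1) \<Longrightarrow> lambertW y > -1"
  by (metis mult_exp_surj lambertW_mult_exp)

lemma mult_exp_lambertW: "y > - exp (-1) \<Longrightarrow> lambertW y * exp (lambertW y) = y"
  by (metis mult_exp_surj lambertW_mult_exp)

lemma lambertW_0 [simp]: "lambertW 0 = 0"
  using lambertW_mult_exp[of 0] by simp

lemma minus_exp_minus_one_less: "0 \<le> y \<Longrightarrow> - exp (-1) < (y::real)"
  by (smt (verit) exp_gt_zero)

lemma lambertW_pos:
  assumes "y > 0" shows "lambertW y > 0"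
proof -
  have "lambertW y * exp (lambertW y) > 0"
    using assms by (simp add: mult_exp_lambertW minus_exp_minus_one_less)
  then show ?thesis by (simp add: zero_less_mult_iff)
qed

lemma lambertW_mono:
  assumes "y > - exp (-1)" "y \<le> y'" shows "lambertW y \<le> lambertW y'"
proof (rule ccontr)
  assume "\<not> lambertW y \<le> lambertW y'"
  moreover have "y' > - exp (-1)" using assms by simp
  ultimately have "lambertW y' * exp (lambertW y') < lambertW y * exp (lambertW y)"
    using assms by (intro strict_mono_onD[OF strict_mono_on_mult_exp]) (simp_all add: lambertW_gt_minus_one)
  with assms \<open>y' > - exp (-1)\<close> show False by (simp add: mult_exp_lambertW)
qed

lemma isCont_lambertW:
  assumes "y > - exp (-1)" shows "isCont lambertW y"
proof -
  define x where "x = lambertW y"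
  have "x > -1" using assms by (simp add: x_def lambertW_gt_minus_one)
  have "isCont lambertW ((\<lambda>z. z * exp z) x)"
  proof (rule isCont_inverse_function[where f = "\<lambda>z. z * exp z" and x = x and d = "(x + 1) / 2"])
    fix z assume "\<bar>z - x\<bar> \<le> (x + 1) / 2"
    then have "x - z \<le> (x + 1) / 2" by (metis abs_ge_minus_self minus_diff_eq order_trans)
    then have "z > -1" using \<open>x > -1\<close> by (simp add: field_simps)
    then show "lambertW (z * exp z) = z" by (rule lambertW_mult_exp)
  qed (use \<open>x > -1\<close> in \<open>auto intro: continuous_intros\<close>)
  then show ?thesis using assms by (simp add: x_def mult_exp_lambertW)
qed

lemma DERIV_lambertW:
  assumes "y > - exp (-1)"
  shows "DERIV lambertW y :> inverse (exp (lambertW y) * (1 + lambertW y))"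
proof (rule DERIV_inverse_function[where f = "\<lambda>z. z * exp z" and a = "- exp (-1)" and b = "y + 1"])
  show "exp (lambertW y) * (1 + lambertW y) \<noteq> 0"
    using lambertW_gt_minus_one[OF assms] by simp
qed (use assms in \<open>simp_all add: DERIV_mult_exp mult_exp_lambertW isCont_lambertW\<close>)

lemma tendsto_lambertW_0: "(lambertW \<longlongrightarrow> 0) (at 0)"
  using isCont_lambertW[of 0] by (simp add: isCont_def)

lemma filterlim_lambertW_at_top: "filterlim lambertW at_top at_top"
  unfolding filterlim_at_top
proof
  fix B :: real
  define x where "x = max B 0"
  have "\<forall>\<^sub>F y in at_top. x * exp x \<le> y" by (rule eventually_ge_at_top)
  then show "\<forall>\<^sub>F y in at_top. B \<le> lambertW y"
  proof (rule eventually_mono)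
    fix y assume "x * exp x \<le> y"
    then have "lambertW (x * exp x) \<le> lambertW y"
      by (intro lambertW_mono minus_exp_minus_one_less) (simp_all add: x_def)
    then show "B \<le> lambertW y" by (simp add: x_def lambertW_mult_exp)
  qed
qed

definition dbar_shape :: "real \<Rightarrow> real" where
  "dbar_shape y = (lambertW y + (lambertW y)\<^sup>2 / 2) / y"

lemma dbar_shape_mult_exp:
  assumes "w > 0" shows "dbar_shape (w * exp w) = exp (- w) * (1 + w / 2)"
  using assms by (simp add: dbar_shape_def lambertW_mult_exp exp_minus field_simps power2_eq_square)

lemma dbar_shape_eq_exp:
  assumes "y > 0" shows "dbar_shape y = exp (- lambertW y) * (1 + lambertW y / 2)"
  using dbar_shape_mult_exp[OF lambertW_pos[OF assms]] assms
  by (simp add: mult_exp_lambertW minus_exp_minus_one_less)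

lemma DERIV_dbar_shape:
  assumes "y > 0" shows "DERIV dbar_shape y :> - exp (-2 * lambertW y) / 2"
proof -
  define u where "u = lambertW y"
  have "u > 0" using assms by (simp add: u_def lambertW_pos)
  have "DERIV (\<lambda>v. exp (- v) * (1 + v / 2)) u :> - exp (- u) * (1 + u) / 2"
    by (auto intro!: derivative_eq_intros simp: field_simps)
  then have "DERIV (\<lambda>y. exp (- lambertW y) * (1 + lambertW y / 2)) y
      :> - exp (- u) * (1 + u) / 2 * inverse (exp u * (1 + u))"
    using DERIV_lambertW[of y] assms unfolding u_def
    by (intro DERIV_chain2) (simp_all add: minus_exp_minus_one_less)
  also have "- exp (- u) * (1 + u) / 2 * inverse (exp u * (1 + u)) = - exp (-2 * u) / 2"
  proof -
    have "exp (-2 * u) = exp (- u) * exp (- u)" by (simp flip: exp_add)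
    then show ?thesis using \<open>u > 0\<close> by (simp add: exp_minus inverse_mult_distrib)
  qed
  finally show ?thesis
    unfolding u_def
    by (rule has_field_derivative_transform_within_open[where S = "{0<..}"])
       (simp_all add: assms dbar_shape_eq_exp)
qed

lemma C1_differentiable_on_dbar_shape: "dbar_shape C1_differentiable_on {0<..}"
  unfolding C1_differentiable_on_def
proof (intro exI conjI ballI)
  show "(dbar_shape has_vector_derivative - exp (-2 * lambertW y) / 2) (at y)" if "y \<in> {0<..}" for y
    using DERIV_dbar_shape[of y] that by (simp add: has_real_derivative_iff_has_vector_derivative)
  have "continuous_on {0<..} lambertW"
    by (intro continuous_at_imp_continuous_on ballI isCont_lambertW minus_exp_minus_one_less) simp
  then show "continuous_on {0<..} (\<lambda>y. - exp (-2 * lambertW y) / 2)"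
    by (intro continuous_intros) auto
qed

lemma strict_antimono_on_dbar_shape: "strict_antimono_on {0<..} dbar_shape"
proof (rule monotone_onI)
  fix x y :: real assume "x \<in> {0<..}" "x < y"
  show "dbar_shape y < dbar_shape x"
  proof (rule DERIV_neg_imp_decreasing[OF \<open>x < y\<close>])
    fix z assume "x \<le> z"
    then show "\<exists>D. DERIV dbar_shape z :> D \<and> D < 0"
      using \<open>x \<in> {0<..}\<close> DERIV_dbar_shape[of z] by force
  qed
qed

lemma dbar_shape_pos_le_one:
  assumes "y > 0" shows "0 < dbar_shape y" "dbar_shape y \<le> 1"
proof -
  define w where "w = lambertW y"
  have "w > 0" using assms by (simp add: w_def lambertW_pos)
  then show "0 < dbar_shape y"
    using assms by (simp add: dbar_shape_eq_exp w_def[symmetric] add_pos_pos)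
  have "1 + w / 2 \<le> exp w" using exp_ge_add_one_self[of w] \<open>w > 0\<close> by linarith
  then show "dbar_shape y \<le> 1"
    using assms by (simp add: dbar_shape_eq_exp w_def[symmetric] exp_minus field_simps)
qed

lemma tendsto_dbar_shape_at_right_0: "(dbar_shape \<longlongrightarrow> 1) (at_right 0)"
proof -
  have "((\<lambda>y. exp (- lambertW y) * (1 + lambertW y / 2)) \<longlongrightarrow> exp (- 0) * (1 + 0 / 2)) (at_right 0)"
    by (intro tendsto_intros tendsto_mono[OF at_le tendsto_lambertW_0]) auto
  then have "((\<lambda>y. exp (- lambertW y) * (1 + lambertW y / 2)) \<longlongrightarrow> 1) (at_right 0)"
    by simp
  then show ?thesis
    by (rule Lim_transform_eventually)
       (use eventually_at_right_less[of 0] in \<open>rule eventually_mono, simp add: dbar_shape_eq_exp\<close>)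
qed

lemma tendsto_dbar_shape_at_top: "(dbar_shape \<longlongrightarrow> 0) at_top"
proof -
  have "((\<lambda>v::real. exp (- v) * (1 + v / 2)) \<longlongrightarrow> 0) at_top" by real_asymp
  then have "((\<lambda>y. exp (- lambertW y) * (1 + lambertW y / 2)) \<longlongrightarrow> 0) at_top"
    using filterlim_lambertW_at_top by (rule filterlim_compose)
  then show ?thesis
    by (rule Lim_transform_eventually)
       (use eventually_gt_at_top[of 0] in \<open>rule eventually_mono, simp add: dbar_shape_eq_exp\<close>)
qed

lemma bounded_dbar_shape: "bounded (dbar_shape ` {0<..})"
  unfolding bounded_iff
proof (intro exI ballI)
  fix z assume "z \<in> dbar_shape ` {0<..}"
  then show "norm z \<le> 1"
    using dbar_shape_pos_le_one by fastforce
qed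

lemma C1_differentiable_on_compose_scale:
  fixes f :: "real \<Rightarrow> 'a::real_normed_vector"
  assumes "f C1_differentiable_on {0<..}" "c > 0"
  shows "(\<lambda>x. f (c * x)) C1_differentiable_on {0<..}"
proof -
  have "(f \<circ> (\<lambda>x. c * x)) C1_differentiable_on {0<..}"
  proof (rule C1_differentiable_compose)
    show "f C1_differentiable_on (\<lambda>x. c * x) ` {0<..}"
      by (rule C1_differentiable_on_subset[OF assms(1)]) (use assms(2) in auto)
    show "finite ({0<..} \<inter> (\<lambda>x. c * x) -` {y})" for y
      using finite_vimage_IntI[of "{y}" "\<lambda>x. c * x" "{0<..}"] assms(2)
      by (simp add: inj_on_def Int_commute)
  qed simp
  then show ?thesis by (simp add: o_def)
qed

lemma strict_antimono_on_compose_scale: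
  fixes f :: "real \<Rightarrow> 'a::order"
  assumes "strict_antimono_on {0<..} f" "c > 0"
  shows "strict_antimono_on {0<..} (\<lambda>x. f (c * x))"
  using assms by (intro monotone_onI monotone_onD[OF assms(1)]) simp_all

lemma scaled_dbar_shape:
  assumes "a > 0" "L > 0"
  defines "f \<equiv> \<lambda>\<gamma>. L * dbar_shape (a * \<gamma>)"
  shows "f C1_differentiable_on {0<..}" "strict_antimono_on {0<..} f"
    "(f \<longlongrightarrow> L) (at_right 0)" "(f \<longlongrightarrow> 0) at_top" "bounded (f ` {0<..})"
proof -
  show "f C1_differentiable_on {0<..}"
    using C1_differentiable_on_compose_scale[OF C1_differentiable_on_dbar_shape \<open>a > 0\<close>]
    by (simp add: f_def)
  show "strict_antimono_on {0<..} f"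
    using strict_antimono_on_compose_scale[OF strict_antimono_on_dbar_shape \<open>a > 0\<close>] \<open>L > 0\<close>
    by (auto simp: f_def monotone_on_def)
  have "(f \<longlongrightarrow> L * 1) (at_right 0)"
    unfolding f_def using \<open>a > 0\<close>
    by (intro tendsto_mult_left filterlim_compose[OF tendsto_dbar_shape_at_right_0]) real_asymp
  then show "(f \<longlongrightarrow> L) (at_right 0)" by simp
  have "(f \<longlongrightarrow> L * 0) at_top"
    unfolding f_def using \<open>a > 0\<close>
    by (intro tendsto_mult_left filterlim_compose[OF tendsto_dbar_shape_at_top]) real_asymp
  then show "(f \<longlongrightarrow> 0) at_top" by simp
  show "bounded (f ` {0<..})"
    by (rule bounded_subset[OF bounded_scaling[OF bounded_dbar_shape, of L]])
       (use \<open>a > 0\<close> in \<open>auto simp: f_def\<close>)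
qed

theorem proposition3:
  fixes T r \<nu> \<mu> \<eta> \<sigma> \<rho> s0 lam \<delta> :: real
    and \<theta> w d :: "real \<Rightarrow> real"
  assumes "T > 0" and "\<eta> > 0" and "\<sigma> > 0" and "-1 < \<rho>" and "\<rho> < 1"
    and "s0 > 0" and "lam > 0"
    and \<delta>_def: "\<delta> = \<nu> - \<eta> * \<rho> * (\<mu> - r) / \<sigma>"
    and \<theta>_def: "\<And>\<gamma>. \<theta> \<gamma> = lam * \<gamma> * (1 - \<rho>\<^sup>2)"
    and w_def: "\<And>\<gamma>. w \<gamma> = lambertW (s0 * \<eta>\<^sup>2 * T * exp ((\<delta> - \<eta>\<^sup>2 / 2) * T) * \<theta> \<gamma>)"
    and d_def: "\<And>\<gamma>. d \<gamma> = lam * exp (- r * T) / (\<theta> \<gamma> * \<eta>\<^sup>2 * T) * (w \<gamma> + (w \<gamma>)\<^sup>2 / 2)"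
  shows "d C1_differentiable_on {0<..} \<and>
    (\<forall>x\<in>{0<..}. \<forall>y\<in>{0<..}. x < y \<longrightarrow> d y < d x) \<and>
    (d \<longlongrightarrow> lam * exp (- r * T) * s0 * exp ((\<delta> - \<eta>\<^sup>2 / 2) * T)) (at_right 0) \<and>
    (d \<longlongrightarrow> 0) at_top \<and>
    bounded (d ` {0<..})"
proof -
  define E where "E = exp ((\<delta> - \<eta>\<^sup>2 / 2) * T)"
  define a where "a = s0 * \<eta>\<^sup>2 * T * E * (lam * (1 - \<rho>\<^sup>2))"
  define L where "L = lam * exp (- r * T) * s0 * E"
  have "\<rho>\<^sup>2 < 1" using assms by (simp add: abs_square_less_1)
  then have "a > 0" "L > 0" using assms by (simp_all add: a_def L_def E_def)
  have "d \<gamma> = L * dbar_shape (a * \<gamma>)" for \<gamma>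
  proof -
    have "s0 * \<eta>\<^sup>2 * T * E * \<theta> \<gamma> = a * \<gamma>" by (simp add: \<theta>_def a_def)
    moreover have "lam * exp (- r * T) / (\<theta> \<gamma> * \<eta>\<^sup>2 * T) = L / (a * \<gamma>)"
      \<comment> \<open>at \<gamma> = 0 both sides are divisions by zero\<close>
      using \<open>T > 0\<close> \<open>\<eta> > 0\<close> \<open>s0 > 0\<close> \<open>lam > 0\<close> \<open>\<rho>\<^sup>2 < 1\<close>
      by (cases "\<gamma> = 0") (simp_all add: \<theta>_def a_def L_def E_def field_simps)
    ultimately show ?thesis by (simp add: d_def w_def dbar_shape_def flip: E_def)
  qed
  then have "d = (\<lambda>\<gamma>. L * dbar_shape (a * \<gamma>))" by blast
  with scaled_dbar_shape[OF \<open>a > 0\<close> \<open>L > 0\<close>] show ?thesis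
    by (simp add: monotone_on_def L_def E_def)
qed

end
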